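(* Fix $r\in\mathbb R$ and let $\rho>0$. For $\theta\in[0,\pi]$, the function $\theta\mapsto\Re\,g_0(\rho e^{i\theta},0,r)$ is decreasing where $$\cos\theta<\frac{1+\rho^2}{2\sqrt2\,\rho}$$ holds and increasing where it does not hold; for $\theta\in[\pi,2\pi]$ the opposite is true. Let $R>0$. For $\phi\in[0,\pi]$, the function $\phi\mapsto-\Re\,g_0(1-Re^{-i\phi},0,r)$ is decreasing where $Q>0$ and increasing where $Q<0$, where $$Q=6\sqrt2-4+(3\sqrt2+2)R^2+16r+4R^2r-8\sqrt2R(1+\sqrt2r)\cos\phi;$$ for $\phi\in[\pi,2\pi]$ the opposite is true. (Monotonicity is meant on intervals avoiding the points $0,\pm1$ where $g_0$ is singular.)
   Context: For $z\in\mathbb C\setminus\{0,1,-1\}$ and $s,r\in\mathbb R$, $$g_0(z,s,r)=\Big(\tfrac1{2\sqrt2}-\tfrac12-s+r\Big)\log z+\Big(\tfrac12-\tfrac1{2\sqrt2}-s\Big)\log(1-z)+\Big(\tfrac12+\tfrac1{2\sqrt2}+s\Big)\log(1+z)+(r-2s)\log(\sqrt2+1)-\tfrac{\log2}{2};$$ its real part does not depend on the choice of branches of the logarithms. *)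

theory Defs
  imports "HOL-Analysis.Analysis"
begin

text \<open>The function g_0(z,s,r), using the principal branch Ln of the complex logarithm
  (the real part is branch independent).\<close>
definition g0 :: "complex \<Rightarrow> real \<Rightarrow> real \<Rightarrow> complex" where
  "g0 z s r =
     complex_of_real (1 / (2 * sqrt 2) - 1/2 - s + r) * Ln z
   + complex_of_real (1/2 - 1 / (2 * sqrt 2) - s) * Ln (1 - z)
   + complex_of_real (1/2 + 1 / (2 * sqrt 2) + s) * Ln (1 + z)
   + complex_of_real ((r - 2 * s) * ln (sqrt 2 + 1) - ln 2 / 2)"

definition dec_where :: "(real \<Rightarrow> real) \<Rightarrow> (real \<Rightarrow> bool) \<Rightarrow> real \<Rightarrow> real \<Rightarrow> bool" where
  "dec_where f P a b \<longleftrightarrow>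
     (\<forall>x y. a \<le> x \<and> x < y \<and> y \<le> b \<and> (\<forall>t\<in>{x..y}. P t) \<longrightarrow> f y < f x)"

definition inc_where :: "(real \<Rightarrow> real) \<Rightarrow> (real \<Rightarrow> bool) \<Rightarrow> real \<Rightarrow> real \<Rightarrow> bool" where
  "inc_where f P a b \<longleftrightarrow>
     (\<forall>x y. a \<le> x \<and> x < y \<and> y \<le> b \<and> (\<forall>t\<in>{x..y}. P t) \<longrightarrow> f x < f y)"

end

theory Submission
  imports Defs
begin

(* On the circle z = \<rho> e^(i \<theta>) the term ln |z| is constant and |1 -+ z|^2 = 1 + \<rho>^2 -+ 2 \<rho> cos \<theta>,
   so up to a constant Re g0 is a combination of logarithms of affine functions of cos \<theta>, whose
   \<theta>-derivative is sin \<theta> * 2 \<rho>^2 (cos \<theta> - \<tau>) / (|1 - z|^2 |1 + z|^2) with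
   \<tau> = (1 + \<rho>^2) / (2 sqrt 2 \<rho>).  Likewise, on the circle w = 1 - R e^(-i \<phi>) the derivative of
   - Re g0 is - sin \<phi> * R Q(\<phi>) / (4 |w|^2 |1 + w|^2).  The mean value theorem and the sign of sin
   on [0, pi] and [pi, 2 pi] give the monotonicity claims. *)

lemma dec_where_by_deriv:
  assumes "\<And>t. P t \<Longrightarrow> f t = F t + K"
    and "\<And>t. P t \<Longrightarrow> (F has_real_derivative F' t) (at t)"
    and "\<And>x y t. a \<le> x \<Longrightarrow> x < t \<Longrightarrow> t < y \<Longrightarrow> y \<le> b \<Longrightarrow> \<forall>u\<in>{x..y}. P u \<Longrightarrow> F' t < 0"
  shows "dec_where f P a b"
  unfolding dec_where_def
proof (intro allI impI)
  fix x y assume xy: "a \<le> x \<and> x < y \<and> y \<le> b \<and> (\<forall>t\<in>{x..y}. P t)"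
  then obtain \<xi> where \<xi>: "x < \<xi>" "\<xi> < y" "F y - F x = (y - x) * F' \<xi>"
    using MVT2[of x y F F'] assms(2) by auto
  moreover have "F' \<xi> < 0"
    using assms(3) xy \<xi> by blast
  ultimately have "F y - F x < 0"
    using xy by (simp add: mult_pos_neg)
  then show "f y < f x"
    using assms(1) xy by auto
qed

lemma dec_where_uminus_iff: "dec_where (\<lambda>t. - f t) P a b \<longleftrightarrow> inc_where f P a b"
  by (simp add: dec_where_def inc_where_def)

lemma inc_where_uminus_iff: "inc_where (\<lambda>t. - f t) P a b \<longleftrightarrow> dec_where f P a b"
  by (simp add: dec_where_def inc_where_def)

lemma inc_where_by_deriv:
  assumes "\<And>t. P t \<Longrightarrow> f t = F t + K"
    and "\<And>t. P t \<Longrightarrow> (F has_real_derivative F' t) (at t)"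
    and "\<And>x y t. a \<le> x \<Longrightarrow> x < t \<Longrightarrow> t < y \<Longrightarrow> y \<le> b \<Longrightarrow> \<forall>u\<in>{x..y}. P u \<Longrightarrow> F' t > 0"
  shows "inc_where f P a b"
  unfolding dec_where_uminus_iff[symmetric]
  by (rule dec_where_by_deriv[where F = "\<lambda>t. - F t" and F' = "\<lambda>t. - F' t" and K = "- K"])
     (use assms in \<open>auto intro: DERIV_minus\<close>)

(* E need only be positive inside P-intervals lying in one half-period, so it may vanish at
   their endpoints. *)
lemma inc_dec_where_sin_mult_pos:
  assumes "\<And>t. P t \<Longrightarrow> f t = F t + K"
    and "\<And>t. P t \<Longrightarrow> (F has_real_derivative sin t * E t) (at t)"
    and "\<And>x y t. 0 \<le> x \<Longrightarrow> x < t \<Longrightarrow> t < y \<Longrightarrow> y \<le> 2 * pi \<Longrightarrow> y \<le> pi \<or> pi \<le> x \<Longrightarrow>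
           \<forall>u\<in>{x..y}. P u \<Longrightarrow> E t > 0"
  shows "inc_where f P 0 pi \<and> dec_where f P pi (2 * pi)"
proof
  show "inc_where f P 0 pi"
  proof (rule inc_where_by_deriv[OF assms(1,2)])
    fix x y t assume "0 \<le> x" "x < t" "t < y" "y \<le> pi" "\<forall>u\<in>{x..y}. P u"
    then show "sin t * E t > 0"
      using assms(3)[of x t y] sin_gt_zero[of t] by auto
  qed
  show "dec_where f P pi (2 * pi)"
  proof (rule dec_where_by_deriv[OF assms(1,2)])
    fix x y t assume "pi \<le> x" "x < t" "t < y" "y \<le> 2 * pi" "\<forall>u\<in>{x..y}. P u"
    then show "sin t * E t < 0"
      using assms(3)[of x t y] sin_lt_zero[of t] pi_gt_zero by (auto simp: mult_neg_pos)
  qed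
qed

lemma dec_inc_where_sin_mult_neg:
  assumes "\<And>t. P t \<Longrightarrow> f t = F t + K"
    and "\<And>t. P t \<Longrightarrow> (F has_real_derivative sin t * E t) (at t)"
    and "\<And>x y t. 0 \<le> x \<Longrightarrow> x < t \<Longrightarrow> t < y \<Longrightarrow> y \<le> 2 * pi \<Longrightarrow> y \<le> pi \<or> pi \<le> x \<Longrightarrow>
           \<forall>u\<in>{x..y}. P u \<Longrightarrow> E t < 0"
  shows "dec_where f P 0 pi \<and> inc_where f P pi (2 * pi)"
proof -
  have "inc_where (\<lambda>t. - f t) P 0 pi \<and> dec_where (\<lambda>t. - f t) P pi (2 * pi)"
  proof (rule inc_dec_where_sin_mult_pos[where F = "\<lambda>t. - F t" and K = "- K" and E = "\<lambda>t. - E t"])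
    show "(- f t) = - F t + - K" if "P t" for t
      using assms(1)[OF that] by simp
    show "((\<lambda>t. - F t) has_real_derivative sin t * - E t) (at t)" if "P t" for t
      using DERIV_minus[OF assms(2)[OF that]] by simp
  qed (use assms(3) in force)
  then show ?thesis
    unfolding inc_where_uminus_iff dec_where_uminus_iff .
qed

lemma cos_gt_min_endpoint:
  assumes "0 \<le> x" "x < t" "t < y" "y \<le> 2 * pi" "y \<le> pi \<or> pi \<le> x"
  shows "min (cos x) (cos y) < cos t"
  using assms(5)
proof
  assume "y \<le> pi"
  then show ?thesis
    using cos_monotone_0_pi[of t y] assms by simp
next
  assume "pi \<le> x"
  then show ?thesis
    using cos_monotone_minus_pi_0[of "x - 2 * pi" "t - 2 * pi"] assms by (simp add: cos_diff)
qed

lemma norm_minus_polar_squared: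
  "(cmod (of_real c - of_real p * exp (\<i> * of_real t)))\<^sup>2 = c\<^sup>2 + p\<^sup>2 - 2 * c * p * cos t"
proof -
  have "(cmod (of_real c - of_real p * exp (\<i> * of_real t)))\<^sup>2 = (c - p * cos t)\<^sup>2 + (p * sin t)\<^sup>2"
    by (simp add: cmod_power2 Re_exp Im_exp)
  also have "\<dots> = c\<^sup>2 + p\<^sup>2 - 2 * c * p * cos t"
    using sin_cos_squared_add[of t] by algebra
  finally show ?thesis .
qed

lemma ln_norm_eq_half_ln_norm_squared:
  fixes z :: "'a :: real_normed_vector"
  assumes "z \<noteq> 0"
  shows "ln (norm z) = ln ((norm z)\<^sup>2) / 2"
  using assms by (simp add: ln_realpow)

lemma Re_g0_zero:
  assumes "z \<notin> {0, 1, -1}"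
  shows "Re (g0 z 0 r) = (sqrt 2 / 4 - 1/2 + r) * ln (cmod z) + (1/2 - sqrt 2 / 4) * ln (cmod (1 - z))
           + (1/2 + sqrt 2 / 4) * ln (cmod (1 + z)) + r * ln (sqrt 2 + 1) - ln 2 / 2"
proof -
  have "z \<noteq> 0" "1 - z \<noteq> 0" "1 + z \<noteq> 0"
    using assms by (auto simp: add_eq_0_iff)
  moreover have "1 / (2 * sqrt 2) = sqrt 2 / 4"
    by (simp add: field_simps)
  ultimately show ?thesis
    unfolding g0_def \<open>1 / (2 * sqrt 2) = sqrt 2 / 4\<close> by (simp add: Re_Ln)
qed

lemma Re_g0_circle:
  assumes "\<rho> > 0" and z: "z = of_real \<rho> * exp (\<i> * of_real \<theta>)" "z \<notin> {0, 1, -1}"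
  shows "1 + \<rho>\<^sup>2 - 2 * \<rho> * cos \<theta> > 0" "1 + \<rho>\<^sup>2 + 2 * \<rho> * cos \<theta> > 0"
    and "Re (g0 z 0 r) = (1/2 - sqrt 2 / 4) / 2 * ln (1 + \<rho>\<^sup>2 - 2 * \<rho> * cos \<theta>)
           + (1/2 + sqrt 2 / 4) / 2 * ln (1 + \<rho>\<^sup>2 + 2 * \<rho> * cos \<theta>)
           + ((sqrt 2 / 4 - 1/2 + r) * ln \<rho> + r * ln (sqrt 2 + 1) - ln 2 / 2)"
proof -
  have nz: "1 - z \<noteq> 0" "1 + z \<noteq> 0"
    using z(2) by (auto simp: add_eq_0_iff)
  have minus: "(cmod (1 - z))\<^sup>2 = 1 + \<rho>\<^sup>2 - 2 * \<rho> * cos \<theta>"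
    using norm_minus_polar_squared[of 1 \<rho> \<theta>] z(1) by simp
  have plus: "(cmod (1 + z))\<^sup>2 = 1 + \<rho>\<^sup>2 + 2 * \<rho> * cos \<theta>"
    using norm_minus_polar_squared[of 1 "- \<rho>" \<theta>] z(1) by simp
  show "1 + \<rho>\<^sup>2 - 2 * \<rho> * cos \<theta> > 0" "1 + \<rho>\<^sup>2 + 2 * \<rho> * cos \<theta> > 0"
    using nz unfolding minus[symmetric] plus[symmetric] by auto
  have norm: "cmod z = \<rho>"
    using z(1) \<open>\<rho> > 0\<close> by (simp add: norm_mult)
  have ln_minus: "ln (cmod (1 - z)) = ln (1 + \<rho>\<^sup>2 - 2 * \<rho> * cos \<theta>) / 2"
    unfolding minus[symmetric] by (rule ln_norm_eq_half_ln_norm_squared[OF nz(1)])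
  have ln_plus: "ln (cmod (1 + z)) = ln (1 + \<rho>\<^sup>2 + 2 * \<rho> * cos \<theta>) / 2"
    unfolding plus[symmetric] by (rule ln_norm_eq_half_ln_norm_squared[OF nz(2)])
  show "Re (g0 z 0 r) = (1/2 - sqrt 2 / 4) / 2 * ln (1 + \<rho>\<^sup>2 - 2 * \<rho> * cos \<theta>)
           + (1/2 + sqrt 2 / 4) / 2 * ln (1 + \<rho>\<^sup>2 + 2 * \<rho> * cos \<theta>)
           + ((sqrt 2 / 4 - 1/2 + r) * ln \<rho> + r * ln (sqrt 2 + 1) - ln 2 / 2)"
    unfolding Re_g0_zero[OF z(2)] norm ln_minus ln_plus by (simp add: algebra_simps)
qed

lemma Re_g0_shifted_circle:
  assumes "R > 0" and w: "w = 1 - of_real R * exp (- \<i> * of_real \<phi>)" "w \<notin> {0, 1, -1}"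
  shows "1 + R\<^sup>2 - 2 * R * cos \<phi> > 0" "4 + R\<^sup>2 - 4 * R * cos \<phi> > 0"
    and "- Re (g0 w 0 r) = - (sqrt 2 / 4 - 1/2 + r) / 2 * ln (1 + R\<^sup>2 - 2 * R * cos \<phi>)
           - (1/2 + sqrt 2 / 4) / 2 * ln (4 + R\<^sup>2 - 4 * R * cos \<phi>)
           - ((1/2 - sqrt 2 / 4) * ln R + r * ln (sqrt 2 + 1) - ln 2 / 2)"
proof -
  have nz: "w \<noteq> 0" "1 + w \<noteq> 0"
    using w(2) by (auto simp: add_eq_0_iff)
  have minus: "(cmod w)\<^sup>2 = 1 + R\<^sup>2 - 2 * R * cos \<phi>"
    using norm_minus_polar_squared[of 1 R "- \<phi>"] w(1) by simp
  have plus: "(cmod (1 + w))\<^sup>2 = 4 + R\<^sup>2 - 4 * R * cos \<phi>"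
    using norm_minus_polar_squared[of 2 R "- \<phi>"] w(1) by (simp add: power2_eq_square)
  show "1 + R\<^sup>2 - 2 * R * cos \<phi> > 0" "4 + R\<^sup>2 - 4 * R * cos \<phi> > 0"
    using nz unfolding minus[symmetric] plus[symmetric] by auto
  have norm: "cmod (1 - w) = R"
    using w(1) \<open>R > 0\<close> by (simp add: norm_mult)
  have ln_minus: "ln (cmod w) = ln (1 + R\<^sup>2 - 2 * R * cos \<phi>) / 2"
    unfolding minus[symmetric] by (rule ln_norm_eq_half_ln_norm_squared[OF nz(1)])
  have ln_plus: "ln (cmod (1 + w)) = ln (4 + R\<^sup>2 - 4 * R * cos \<phi>) / 2"
    unfolding plus[symmetric] by (rule ln_norm_eq_half_ln_norm_squared[OF nz(2)])
  show "- Re (g0 w 0 r) = - (sqrt 2 / 4 - 1/2 + r) / 2 * ln (1 + R\<^sup>2 - 2 * R * cos \<phi>)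
           - (1/2 + sqrt 2 / 4) / 2 * ln (4 + R\<^sup>2 - 4 * R * cos \<phi>)
           - ((1/2 - sqrt 2 / 4) * ln R + r * ln (sqrt 2 + 1) - ln 2 / 2)"
    unfolding Re_g0_zero[OF w(2)] norm ln_minus ln_plus by (simp add: field_simps)
qed

lemma Re_g0_circle_monotone:
  fixes r \<rho> :: real
  assumes "\<rho> > 0"
  defines "f \<equiv> (\<lambda>\<theta>. Re (g0 (of_real \<rho> * exp (\<i> * of_real \<theta>)) 0 r))"
    and "Z \<equiv> (\<lambda>\<theta>. of_real \<rho> * exp (\<i> * of_real \<theta>) \<notin> {0, 1, -1::complex})"
    and "\<tau> \<equiv> (1 + \<rho>\<^sup>2) / (2 * sqrt 2 * \<rho>)"
  shows "dec_where f (\<lambda>\<theta>. cos \<theta> < \<tau> \<and> Z \<theta>) 0 pi \<and> inc_where f (\<lambda>\<theta>. cos \<theta> < \<tau> \<and> Z \<theta>) pi (2 * pi)"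
    and "inc_where f (\<lambda>\<theta>. \<not> cos \<theta> < \<tau> \<and> Z \<theta>) 0 pi \<and> dec_where f (\<lambda>\<theta>. \<not> cos \<theta> < \<tau> \<and> Z \<theta>) pi (2 * pi)"
proof -
  define A where "A \<theta> = 1 + \<rho>\<^sup>2 - 2 * \<rho> * cos \<theta>" for \<theta>
  define B where "B \<theta> = 1 + \<rho>\<^sup>2 + 2 * \<rho> * cos \<theta>" for \<theta>
  define F where "F \<theta> = (1/2 - sqrt 2 / 4) / 2 * ln (A \<theta>) + (1/2 + sqrt 2 / 4) / 2 * ln (B \<theta>)" for \<theta>
  define E where "E \<theta> = 2 * \<rho>\<^sup>2 * (cos \<theta> - \<tau>) / (A \<theta> * B \<theta>)" for \<theta>
  have AB_pos: "A \<theta> > 0" "B \<theta> > 0" if "Z \<theta>" for \<theta>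
    using Re_g0_circle(1,2)[OF assms(1) refl that[unfolded Z_def]] by (simp_all add: A_def B_def)
  have f_eq: "f \<theta> = F \<theta> + ((sqrt 2 / 4 - 1/2 + r) * ln \<rho> + r * ln (sqrt 2 + 1) - ln 2 / 2)"
    if "Z \<theta>" for \<theta>
    using Re_g0_circle(3)[OF assms(1) refl that[unfolded Z_def]] by (simp add: f_def F_def A_def B_def)
  have \<rho>\<tau>: "\<rho> * \<tau> = sqrt 2 * (1 + \<rho>\<^sup>2) / 4"
    using assms(1) by (simp add: \<tau>_def field_simps)
  have deriv: "(F has_real_derivative sin \<theta> * E \<theta>) (at \<theta>)" if "Z \<theta>" for \<theta>
  proof -
    have "((\<lambda>x. ln (A x)) has_real_derivative 2 * \<rho> * sin \<theta> / A \<theta>) (at \<theta>)"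
      using AB_pos(1)[OF that] unfolding A_def by (auto intro!: derivative_eq_intros)
    moreover have "((\<lambda>x. ln (B x)) has_real_derivative - 2 * \<rho> * sin \<theta> / B \<theta>) (at \<theta>)"
      using AB_pos(2)[OF that] unfolding B_def by (auto intro!: derivative_eq_intros)
    ultimately have "(F has_real_derivative (1/2 - sqrt 2 / 4) / 2 * (2 * \<rho> * sin \<theta> / A \<theta>)
                                 + (1/2 + sqrt 2 / 4) / 2 * (- 2 * \<rho> * sin \<theta> / B \<theta>)) (at \<theta>)"
      unfolding F_def[abs_def] by (intro DERIV_add DERIV_cmult)
    also have "(1/2 - sqrt 2 / 4) / 2 * (2 * \<rho> * sin \<theta> / A \<theta>) + (1/2 + sqrt 2 / 4) / 2 * (- 2 * \<rho> * sin \<theta> / B \<theta>)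
        = 2 * \<rho> * sin \<theta> * ((1/2 - sqrt 2 / 4) / 2 * B \<theta> - (1/2 + sqrt 2 / 4) / 2 * A \<theta>) / (A \<theta> * B \<theta>)"
      using AB_pos[OF that] by (simp add: field_simps)
    also have "(1/2 - sqrt 2 / 4) / 2 * B \<theta> - (1/2 + sqrt 2 / 4) / 2 * A \<theta> = \<rho> * cos \<theta> - \<rho> * \<tau>"
      unfolding \<rho>\<tau> by (simp add: A_def B_def field_simps)
    also have "2 * \<rho> * sin \<theta> * (\<rho> * cos \<theta> - \<rho> * \<tau>) / (A \<theta> * B \<theta>) = sin \<theta> * E \<theta>"
      unfolding E_def by (simp add: power2_eq_square algebra_simps)
    finally show ?thesis .
  qed
  show "dec_where f (\<lambda>\<theta>. cos \<theta> < \<tau> \<and> Z \<theta>) 0 pi \<and> inc_where f (\<lambda>\<theta>. cos \<theta> < \<tau> \<and> Z \<theta>) pi (2 * pi)"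
  proof (rule dec_inc_where_sin_mult_neg[OF f_eq deriv])
    fix x y t assume "x < t" "t < y" "\<forall>u\<in>{x..y}. cos u < \<tau> \<and> Z u"
    then have "cos t < \<tau>" "Z t"
      by auto
    then show "E t < 0"
      using AB_pos[of t] assms(1) by (simp add: E_def divide_neg_pos mult_pos_neg)
  qed auto
  show "inc_where f (\<lambda>\<theta>. \<not> cos \<theta> < \<tau> \<and> Z \<theta>) 0 pi \<and> dec_where f (\<lambda>\<theta>. \<not> cos \<theta> < \<tau> \<and> Z \<theta>) pi (2 * pi)"
  proof (rule inc_dec_where_sin_mult_pos[OF f_eq deriv])
    fix x y t assume "0 \<le> x" "x < t" "t < y" "y \<le> 2 * pi" "y \<le> pi \<or> pi \<le> x"
      and P: "\<forall>u\<in>{x..y}. \<not> cos u < \<tau> \<and> Z u"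
    then have "min (cos x) (cos y) < cos t"
      by (intro cos_gt_min_endpoint)
    moreover have "\<tau> \<le> cos x" "\<tau> \<le> cos y" "Z t"
      using P[rule_format, of x] P[rule_format, of y] P[rule_format, of t] \<open>x < t\<close> \<open>t < y\<close>
      by auto
    ultimately show "E t > 0"
      using AB_pos[of t] assms(1) by (simp add: E_def)
  qed auto
qed

lemma Re_g0_shifted_circle_monotone:
  fixes r R :: real
  assumes "R > 0"
  defines "h \<equiv> (\<lambda>\<phi>. - Re (g0 (1 - of_real R * exp (- \<i> * of_real \<phi>)) 0 r))"
    and "Z \<equiv> (\<lambda>\<phi>. 1 - of_real R * exp (- \<i> * of_real \<phi>) \<notin> {0, 1, -1::complex})"
    and "Q \<equiv> (\<lambda>\<phi>. 6 * sqrt 2 - 4 + (3 * sqrt 2 + 2) * R\<^sup>2 + 16 * r + 4 * R\<^sup>2 * r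
                     - 8 * sqrt 2 * R * (1 + sqrt 2 * r) * cos \<phi>)"
  shows "dec_where h (\<lambda>\<phi>. Q \<phi> > 0 \<and> Z \<phi>) 0 pi \<and> inc_where h (\<lambda>\<phi>. Q \<phi> > 0 \<and> Z \<phi>) pi (2 * pi)"
    and "inc_where h (\<lambda>\<phi>. Q \<phi> < 0 \<and> Z \<phi>) 0 pi \<and> dec_where h (\<lambda>\<phi>. Q \<phi> < 0 \<and> Z \<phi>) pi (2 * pi)"
proof -
  define a where "a = sqrt 2 / 4 - 1/2 + r"
  define c where "c = 1/2 + sqrt 2 / 4"
  define A where "A \<phi> = 1 + R\<^sup>2 - 2 * R * cos \<phi>" for \<phi>
  define B where "B \<phi> = 4 + R\<^sup>2 - 4 * R * cos \<phi>" for \<phi>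
  define F where "F \<phi> = - a / 2 * ln (A \<phi>) - c / 2 * ln (B \<phi>)" for \<phi>
  define E where "E \<phi> = - R * Q \<phi> / (4 * (A \<phi> * B \<phi>))" for \<phi>
  have AB_pos: "A \<phi> > 0" "B \<phi> > 0" if "Z \<phi>" for \<phi>
    using Re_g0_shifted_circle(1,2)[OF assms(1) refl that[unfolded Z_def]] by (simp_all add: A_def B_def)
  have h_eq: "h \<phi> = F \<phi> + - ((1/2 - sqrt 2 / 4) * ln R + r * ln (sqrt 2 + 1) - ln 2 / 2)"
    if "Z \<phi>" for \<phi>
    using Re_g0_shifted_circle(3)[OF assms(1) refl that[unfolded Z_def]]
    by (simp add: h_def F_def A_def B_def a_def c_def)
  have Q_eq: "Q \<phi> = 4 * (a * B \<phi> + 2 * c * A \<phi>)" for \<phi>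
  proof -
    have "sqrt 2 * (sqrt 2 * x) = 2 * x" for x :: real
      by (simp flip: mult.assoc)
    then show ?thesis
      unfolding Q_def a_def c_def A_def B_def
      by (simp add: algebra_simps power2_eq_square) (simp add: field_simps)
  qed
  have deriv: "(F has_real_derivative sin \<phi> * E \<phi>) (at \<phi>)" if "Z \<phi>" for \<phi>
  proof -
    have "((\<lambda>x. ln (A x)) has_real_derivative 2 * R * sin \<phi> / A \<phi>) (at \<phi>)"
      using AB_pos(1)[OF that] unfolding A_def by (auto intro!: derivative_eq_intros)
    moreover have "((\<lambda>x. ln (B x)) has_real_derivative 4 * R * sin \<phi> / B \<phi>) (at \<phi>)"
      using AB_pos(2)[OF that] unfolding B_def by (auto intro!: derivative_eq_intros)
    ultimately have "(F has_real_derivative - a / 2 * (2 * R * sin \<phi> / A \<phi>) - c / 2 * (4 * R * sin \<phi> / B \<phi>)) (at \<phi>)"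
      unfolding F_def[abs_def] by (intro DERIV_diff DERIV_cmult)
    also have "- a / 2 * (2 * R * sin \<phi> / A \<phi>) - c / 2 * (4 * R * sin \<phi> / B \<phi>)
        = - R * sin \<phi> * (a * B \<phi> + 2 * c * A \<phi>) / (A \<phi> * B \<phi>)"
      using AB_pos[OF that] by (simp add: field_simps)
    also have "\<dots> = sin \<phi> * E \<phi>"
      using AB_pos[OF that] unfolding E_def Q_eq by (simp add: field_simps)
    finally show ?thesis .
  qed
  show "dec_where h (\<lambda>\<phi>. Q \<phi> > 0 \<and> Z \<phi>) 0 pi \<and> inc_where h (\<lambda>\<phi>. Q \<phi> > 0 \<and> Z \<phi>) pi (2 * pi)"
  proof (rule dec_inc_where_sin_mult_neg[OF h_eq deriv])
    fix x y t assume "x < t" "t < y" "\<forall>u\<in>{x..y}. Q u > 0 \<and> Z u"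
    then show "E t < 0"
      using AB_pos[of t] assms(1) by (simp add: E_def divide_neg_pos)
  qed auto
  show "inc_where h (\<lambda>\<phi>. Q \<phi> < 0 \<and> Z \<phi>) 0 pi \<and> dec_where h (\<lambda>\<phi>. Q \<phi> < 0 \<and> Z \<phi>) pi (2 * pi)"
  proof (rule inc_dec_where_sin_mult_pos[OF h_eq deriv])
    fix x y t assume "x < t" "t < y" "\<forall>u\<in>{x..y}. Q u < 0 \<and> Z u"
    then show "E t > 0"
      using AB_pos[of t] assms(1) by (simp add: E_def mult_pos_neg divide_neg_pos)
  qed auto
qed

theorem lemma8p1:
  fixes r \<rho> R :: real
  assumes "\<rho> > 0" and "R > 0"
  defines "f \<equiv> (\<lambda>\<theta>. Re (g0 (of_real \<rho> * exp (\<i> * of_real \<theta>)) 0 r))"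
      and "Z1 \<equiv> (\<lambda>\<theta>. of_real \<rho> * exp (\<i> * of_real \<theta>) \<notin> {0, 1, -1::complex})"
      and "C \<equiv> (\<lambda>\<theta>. cos \<theta> < (1 + \<rho>\<^sup>2) / (2 * sqrt 2 * \<rho>))"
      and "h \<equiv> (\<lambda>\<phi>. - Re (g0 (1 - of_real R * exp (- \<i> * of_real \<phi>)) 0 r))"
      and "Z2 \<equiv> (\<lambda>\<phi>. 1 - of_real R * exp (- \<i> * of_real \<phi>) \<notin> {0, 1, -1::complex})"
      and "Q \<equiv> (\<lambda>\<phi>. 6 * sqrt 2 - 4 + (3 * sqrt 2 + 2) * R\<^sup>2 + 16 * r + 4 * R\<^sup>2 * r
                     - 8 * sqrt 2 * R * (1 + sqrt 2 * r) * cos \<phi>)"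
  shows "dec_where f (\<lambda>\<theta>. C \<theta> \<and> Z1 \<theta>) 0 pi
       \<and> inc_where f (\<lambda>\<theta>. \<not> C \<theta> \<and> Z1 \<theta>) 0 pi
       \<and> inc_where f (\<lambda>\<theta>. C \<theta> \<and> Z1 \<theta>) pi (2 * pi)
       \<and> dec_where f (\<lambda>\<theta>. \<not> C \<theta> \<and> Z1 \<theta>) pi (2 * pi)
       \<and> dec_where h (\<lambda>\<phi>. Q \<phi> > 0 \<and> Z2 \<phi>) 0 pi
       \<and> inc_where h (\<lambda>\<phi>. Q \<phi> < 0 \<and> Z2 \<phi>) 0 pi
       \<and> inc_where h (\<lambda>\<phi>. Q \<phi> > 0 \<and> Z2 \<phi>) pi (2 * pi)
       \<and> dec_where h (\<lambda>\<phi>. Q \<phi> < 0 \<and> Z2 \<phi>) pi (2 * pi)"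
  using Re_g0_circle_monotone[OF assms(1), of r] Re_g0_shifted_circle_monotone[OF assms(2), of r]
  unfolding f_def Z1_def C_def h_def Z2_def Q_def by blast

end
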